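(* Consider the algorithm MF-PSRO(Nash) run on a discrete mean-field game (setting in the context): start with $\Pi_1=\{\pi_1\}$ for some $\pi_1\in\Pi$ and $\nu_1=\delta_{\pi_1}$; at step $n$, pick $\pi^{new}\in\arg\max_{\pi\in\Pi}J(\pi,\mu(\nu_n))$ and set $\Pi_{n+1}=\Pi_n\cup\{\pi^{new}\}$; if $\Pi_{n+1}=\Pi_n$ the algorithm terminates, otherwise it sets $\nu_{n+1}\in\arg\min_{\nu\in\Delta(\Pi_{n+1})}\max_{\pi_i\in\Pi_{n+1}}\big(J(\pi_i,\mu(\nu))-J(\pi(\nu),\mu(\nu))\big)$ and continues. Suppose the algorithm terminates at step $n$ and $\nu_n$ is a restricted mean-field Nash equilibrium for $\Pi_n$, i.e. $J(\pi_i,\mu(\nu_n))\le J(\pi(\nu_n),\mu(\nu_n))$ for all $\pi_i\in\Pi_n$. Then $\pi(\nu_n)$ is a mean-field Nash equilibrium of the full game: $J(\pi,\mu(\nu_n))\le J(\pi(\nu_n),\mu(\nu_n))$ for all $\pi\in\Pi$.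
   Context: A discrete mean-field game consists of a finite state set $\mathcal X$, a finite action set $\mathcal A$, a reward $r:\mathcal X\times\mathcal A\times\Delta(\mathcal X)\to\mathbb R$, transition probabilities $p(x'\mid x,a)$ not depending on the population distribution, and an initial distribution $\mu_0\in\Delta(\mathcal X)$. A policy is a map $\pi:\mathcal X\to\Delta(\mathcal A)$; $\Pi$ is the finite set of deterministic policies. $\mu^\pi$ denotes the state occupancy measure of policy $\pi$ (either $\gamma$-discounted, $\mu^\pi(x)=\mu_0(x)+\gamma\sum_{x',a}p(x\mid x',a)\pi(x',a)\mu^\pi(x')$, or finite-horizon with time in the state). The expected payoff is $J(\pi,\mu)=\sum_{x,a}\mu^\pi(x)\pi(x,a)r(x,a,\mu)$. For a distribution $\nu$ over a finite set of policies, $\mu(\nu)=\sum_\pi\nu(\pi)\mu^\pi$, and $\pi(\nu)$ is the policy that samples a policy from $\nu$ at the start and plays it throughout, so $J(\pi(\nu),\mu)=\sum_\pi\nu(\pi)J(\pi,\mu)$ and $\mu^{\pi(\nu)}=\mu(\nu)$. *)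

theory Defs
  imports Complex_Main
begin

text \<open>Transition kernel: p x a x' = p(x' | x, a).\<close>

definition is_distr :: "('b \<Rightarrow> real) \<Rightarrow> 'b set \<Rightarrow> bool" where
  "is_distr d S \<longleftrightarrow> (\<forall>y. 0 \<le> d y) \<and> (\<forall>y. y \<notin> S \<longrightarrow> d y = 0) \<and> sum d S = 1"

definition valid_mfg :: "real \<Rightarrow> ('x::finite \<Rightarrow> 'a::finite \<Rightarrow> 'x \<Rightarrow> real) \<Rightarrow> ('x \<Rightarrow> real) \<Rightarrow> bool" where
  "valid_mfg \<gamma> p \<mu>0 \<longleftrightarrow> 0 \<le> \<gamma> \<and> \<gamma> < 1 \<and> is_distr \<mu>0 UNIV \<and>
     (\<forall>x a. is_distr (p x a) UNIV)"

text \<open>gamma-discounted state occupancy measure of a deterministic policy: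
  the (unique, for gamma < 1) solution of
  mu(x) = mu0(x) + gamma * sum_{x',a} p(x|x',a) pi(x',a) mu(x').\<close>
definition occ :: "real \<Rightarrow> ('x::finite \<Rightarrow> 'a::finite \<Rightarrow> 'x \<Rightarrow> real) \<Rightarrow> ('x \<Rightarrow> real)
    \<Rightarrow> ('x \<Rightarrow> 'a) \<Rightarrow> 'x \<Rightarrow> real" where
  "occ \<gamma> p \<mu>0 \<pi> = (THE \<mu>. \<forall>x. \<mu> x = \<mu>0 x + \<gamma> * (\<Sum>x'\<in>UNIV. p x' (\<pi> x') x * \<mu> x'))"

definition J :: "real \<Rightarrow> ('x::finite \<Rightarrow> 'a::finite \<Rightarrow> 'x \<Rightarrow> real) \<Rightarrow> ('x \<Rightarrow> real)
    \<Rightarrow> ('x \<Rightarrow> 'a \<Rightarrow> ('x \<Rightarrow> real) \<Rightarrow> real) \<Rightarrow> ('x \<Rightarrow> 'a) \<Rightarrow> ('x \<Rightarrow> real) \<Rightarrow> real" where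
  "J \<gamma> p \<mu>0 r \<pi> \<mu> = (\<Sum>x\<in>UNIV. occ \<gamma> p \<mu>0 \<pi> x * r x (\<pi> x) \<mu>)"

definition mu_of :: "real \<Rightarrow> ('x::finite \<Rightarrow> 'a::finite \<Rightarrow> 'x \<Rightarrow> real) \<Rightarrow> ('x \<Rightarrow> real)
    \<Rightarrow> (('x \<Rightarrow> 'a) \<Rightarrow> real) \<Rightarrow> 'x \<Rightarrow> real" where
  "mu_of \<gamma> p \<mu>0 \<nu> = (\<lambda>x. \<Sum>\<pi>\<in>UNIV. \<nu> \<pi> * occ \<gamma> p \<mu>0 \<pi> x)"

text \<open>J(pi(nu), mu) = sum_pi nu(pi) J(pi, mu).\<close>
definition Jmix :: "real \<Rightarrow> ('x::finite \<Rightarrow> 'a::finite \<Rightarrow> 'x \<Rightarrow> real) \<Rightarrow> ('x \<Rightarrow> real)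
    \<Rightarrow> ('x \<Rightarrow> 'a \<Rightarrow> ('x \<Rightarrow> real) \<Rightarrow> real) \<Rightarrow> (('x \<Rightarrow> 'a) \<Rightarrow> real) \<Rightarrow> ('x \<Rightarrow> real) \<Rightarrow> real" where
  "Jmix \<gamma> p \<mu>0 r \<nu> \<mu> = (\<Sum>\<pi>\<in>UNIV. \<nu> \<pi> * J \<gamma> p \<mu>0 r \<pi> \<mu>)"

definition expl :: "real \<Rightarrow> ('x::finite \<Rightarrow> 'a::finite \<Rightarrow> 'x \<Rightarrow> real) \<Rightarrow> ('x \<Rightarrow> real)
    \<Rightarrow> ('x \<Rightarrow> 'a \<Rightarrow> ('x \<Rightarrow> real) \<Rightarrow> real) \<Rightarrow> ('x \<Rightarrow> 'a) set \<Rightarrow> (('x \<Rightarrow> 'a) \<Rightarrow> real) \<Rightarrow> real" where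
  "expl \<gamma> p \<mu>0 r S \<nu> = (MAX \<pi>i\<in>S. J \<gamma> p \<mu>0 r \<pi>i (mu_of \<gamma> p \<mu>0 \<nu>) - Jmix \<gamma> p \<mu>0 r \<nu> (mu_of \<gamma> p \<mu>0 \<nu>))"

end

theory Submission
  imports Defs
begin

theorem mainTheorem2:
  fixes \<gamma> :: real
    and p :: "'x::finite \<Rightarrow> 'a::finite \<Rightarrow> 'x \<Rightarrow> real"
    and \<mu>0 :: "'x \<Rightarrow> real"
    and r :: "'x \<Rightarrow> 'a \<Rightarrow> ('x \<Rightarrow> real) \<Rightarrow> real"
    and Pi :: "nat \<Rightarrow> ('x \<Rightarrow> 'a) set"
    and nu :: "nat \<Rightarrow> ('x \<Rightarrow> 'a) \<Rightarrow> real"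
    and pnew :: "nat \<Rightarrow> ('x \<Rightarrow> 'a)"
    and \<pi>1 :: "'x \<Rightarrow> 'a"
    and n :: nat
  assumes game: "valid_mfg \<gamma> p \<mu>0"
    and init_Pi: "Pi 1 = {\<pi>1}"
    and init_nu: "nu 1 = (\<lambda>\<pi>. if \<pi> = \<pi>1 then 1 else 0)"
    and n_pos: "1 \<le> n"
    and best_response: "\<forall>k. 1 \<le> k \<and> k \<le> n \<longrightarrow>
        (\<forall>\<pi>. J \<gamma> p \<mu>0 r \<pi> (mu_of \<gamma> p \<mu>0 (nu k)) \<le> J \<gamma> p \<mu>0 r (pnew k) (mu_of \<gamma> p \<mu>0 (nu k)))
        \<and> Pi (Suc k) = Pi k \<union> {pnew k}"
    and continue: "\<forall>k. 1 \<le> k \<and> k < n \<longrightarrow> Pi (Suc k) \<noteq> Pi k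
        \<and> is_distr (nu (Suc k)) (Pi (Suc k))
        \<and> (\<forall>\<nu>. is_distr \<nu> (Pi (Suc k)) \<longrightarrow>
              expl \<gamma> p \<mu>0 r (Pi (Suc k)) (nu (Suc k)) \<le> expl \<gamma> p \<mu>0 r (Pi (Suc k)) \<nu>)"
    and terminates: "Pi (Suc n) = Pi n"
    and restricted_NE: "\<forall>\<pi>i\<in>Pi n. J \<gamma> p \<mu>0 r \<pi>i (mu_of \<gamma> p \<mu>0 (nu n))
        \<le> Jmix \<gamma> p \<mu>0 r (nu n) (mu_of \<gamma> p \<mu>0 (nu n))"
  shows "\<forall>\<pi>. J \<gamma> p \<mu>0 r \<pi> (mu_of \<gamma> p \<mu>0 (nu n))
        \<le> Jmix \<gamma> p \<mu>0 r (nu n) (mu_of \<gamma> p \<mu>0 (nu n))"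
proof
  fix \<pi>
  let ?\<mu> = "mu_of \<gamma> p \<mu>0 (nu n)"
  \<comment> \<open>Only the last iteration matters: the best response found there is already in the
    policy set, where the restricted equilibrium bounds it.\<close>
  have best: "J \<gamma> p \<mu>0 r \<pi> ?\<mu> \<le> J \<gamma> p \<mu>0 r (pnew n) ?\<mu>"
    and extend: "Pi (Suc n) = Pi n \<union> {pnew n}"
    using best_response n_pos by blast+
  have "pnew n \<in> Pi n"
    using extend terminates by blast
  with restricted_NE have "J \<gamma> p \<mu>0 r (pnew n) ?\<mu> \<le> Jmix \<gamma> p \<mu>0 r (nu n) ?\<mu>"
    by blast
  with best show "J \<gamma> p \<mu>0 r \<pi> ?\<mu> \<le> Jmix \<gamma> p \<mu>0 r (nu n) ?\<mu>"
    by (rule order_trans)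
qed

end
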